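(* Let $n$ be a positive integer. Then, modulo $\Phi_n(q)^2$, \[ \sum_{k=0}^{n-1}\frac{(q;q^2)_k^2(q^2;q^4)_k}{(q^2;q^2)_k^2(q^4;q^4)_k}\,q^{2k} \equiv q^{(n-1)/2}\frac{(q^2;q^4)_{(n-1)/4}^2}{(q^4;q^4)_{(n-1)/4}^2}\quad\text{if } n\equiv 1\pmod 4, \] and \[ \sum_{k=0}^{n-1}\frac{(q;q^2)_k^2(q^2;q^4)_k}{(q^2;q^2)_k^2(q^4;q^4)_k}\,q^{2k}\equiv 0\quad\text{if } n\equiv 3\pmod 4. \]
   Context: For an indeterminate $a$ and a nonnegative integer $k$, $(a;q)_k=\prod_{j=0}^{k-1}(1-aq^j)$, with $(a;q)_0=1$. $\Phi_n(q)=\prod_{1\le j\le n,\ \gcd(j,n)=1}(q-e^{2\pi i j/n})$ is the $n$-th cyclotomic polynomial. A congruence between rational functions in $q$ modulo a polynomial $P(q)$ means that the difference, written as a ratio of polynomials with denominator coprime to $P(q)$, has numerator divisible by $P(q)$. *)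

theory Defs
  imports Complex_Main "HOL-Computational_Algebra.Polynomial" "HOL-Computational_Algebra.Fraction_Field"
begin

type_synonym ratfun = "complex poly fract"

definition qvar :: ratfun where
  "qvar = Fract [:0, 1:] 1"

definition rf_of_poly :: "complex poly \<Rightarrow> ratfun" where
  "rf_of_poly p = Fract p 1"

definition qpoch :: "ratfun \<Rightarrow> ratfun \<Rightarrow> nat \<Rightarrow> ratfun" where
  "qpoch a q k = (\<Prod>j<k. 1 - a * q ^ j)"

definition cyclotomic :: "nat \<Rightarrow> complex poly" where
  "cyclotomic n = (\<Prod>j\<in>{j\<in>{1..n}. coprime j n}.
       [:- cis (2 * pi * real j / real n), 1:])"

definition rf_cong :: "ratfun \<Rightarrow> ratfun \<Rightarrow> complex poly \<Rightarrow> bool" where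
  "rf_cong x y P \<longleftrightarrow>
     (\<exists>N M. M \<noteq> 0 \<and> coprime M P \<and> P dvd N \<and> x - y = Fract N M)"

end

(* Put p = q^2 and n = 2N + 1, so that q^(1-n) = p^(-N) and q^(1+n) = p^(N+1). The identity
   (1 - w)^2 = (1 - w q^(-n)) (1 - w q^n) + (1 - q^n)^2 w q^(-n), applied to w = q p^j, shows
   that (q;p)_k^2 is congruent to (p^(-N);p)_k (p^(N+1);p)_k modulo (1 - q^n)^2, hence modulo
   Phi_n^2. For k < n the remaining denominators (p;p)_k^2 (p^2;p^2)_k are coprime to Phi_n
   because n is odd, so the sum is congruent to the terminating series
     sum_k (p^(-N);p)_k (p^(N+1);p)_k (p;p^2)_k p^k / ((p;p)_k^2 (p^2;p^2)_k).
   A special case of Andrews' q-analogue of Watson's formula evaluates this series as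
   p^(N/2) (p;p^2)_(N/2)^2 / (p^2;p^2)_(N/2)^2 for even N and as 0 for odd N. We prove that
   evaluation directly: both sides satisfy the same third-order recurrence in N (a q-Zeilberger
   recurrence, verified through its certificate) and agree for N = 0, 1, 2. *)

theory Submission
  imports
    Defs
    "HOL-Computational_Algebra.Polynomial_Factorial"
    "HOL-Computational_Algebra.Field_as_Ring"
    "HOL-Analysis.Complex_Transcendental"
begin

section \<open>q-Pochhammer symbols\<close>

definition qpochhammer :: "'a::comm_ring_1 \<Rightarrow> 'a \<Rightarrow> nat \<Rightarrow> 'a" where
  "qpochhammer a q k = (\<Prod>j<k. 1 - a * q ^ j)"

lemma qpochhammer_0 [simp]: "qpochhammer a q 0 = 1"
  by (simp add: qpochhammer_def)

lemma qpochhammer_Suc: "qpochhammer a q (Suc k) = qpochhammer a q k * (1 - a * q ^ k)"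
  by (simp add: qpochhammer_def)

lemma qpochhammer_add: "qpochhammer a q (m + k) = qpochhammer a q m * qpochhammer (a * q ^ m) q k"
  by (induction k) (simp_all add: qpochhammer_Suc power_add mult_ac)

lemma qpochhammer_swap:
  "qpochhammer a q m * qpochhammer (a * q ^ m) q k = qpochhammer a q k * qpochhammer (a * q ^ k) q m"
  by (metis qpochhammer_add add.commute)

lemma qpochhammer_eq_0: "j < k \<Longrightarrow> a * q ^ j = 1 \<Longrightarrow> qpochhammer a q k = 0"
  unfolding qpochhammer_def by (rule prod_zero) auto

lemma qpochhammer_nonzero:
  fixes a q :: "'a::idom"
  shows "(\<And>j. j < k \<Longrightarrow> a * q ^ j \<noteq> 1) \<Longrightarrow> qpochhammer a q k \<noteq> 0"
  by (simp add: qpochhammer_def)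

section \<open>A terminating q-Watson sum\<close>

definition watson_weight :: "'a::field \<Rightarrow> nat \<Rightarrow> 'a" where
  "watson_weight p k =
     qpochhammer p (p^2) k * p ^ k / (qpochhammer p p k ^ 2 * qpochhammer (p^2) (p^2) k)"

definition watson_term :: "'a::field \<Rightarrow> nat \<Rightarrow> nat \<Rightarrow> 'a" where
  "watson_term p M k =
     qpochhammer (inverse (p ^ M)) p k * qpochhammer (p ^ (M + 1)) p k * watson_weight p k"

definition watson_sum :: "'a::field \<Rightarrow> nat \<Rightarrow> 'a" where
  "watson_sum p M = (\<Sum>k\<le>M. watson_term p M k)"

definition watson_value :: "'a::field \<Rightarrow> nat \<Rightarrow> 'a" where
  "watson_value p M =
     (if even M
      then p ^ (M div 2) * qpochhammer p (p^2) (M div 2) ^ 2 / qpochhammer (p^2) (p^2) (M div 2) ^ 2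
      else 0)"

(* watson_rec p (p^N) (s N) (s (N+1)) (s (N+2)) (s (N+3)) is the left-hand side of the
   q-Zeilberger recurrence satisfied by s = watson_sum p; watson_cert is its certificate. *)
definition watson_rec :: "'a::field \<Rightarrow> 'a \<Rightarrow> 'a \<Rightarrow> 'a \<Rightarrow> 'a \<Rightarrow> 'a \<Rightarrow> 'a" where
  "watson_rec p u s0 s1 s2 s3 =
       - p * (1 - p*u)^2 * (1 - p^5*u^2) * (p^3*u - 1) * (p^3*u - p) * (p^3*u - p^2) * s0
     + p^5 * u * (1 - p^2*u)^2 * (1 - p^3*u^2) * (p^3*u - 1) * (p^3*u - p) * (1 - p*u) * s1
     + p^3 * (1 - p^2*u)^2 * (1 - p^5*u^2) * (p^3*u - 1) * (1 - p*u) * (1 - p^2*u) * s2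
     - p^5 * u * (1 - p^3*u)^2 * (1 - p^3*u^2) * (1 - p*u) * (1 - p^2*u) * (1 - p^3*u) * s3"

definition watson_cert :: "'a::field \<Rightarrow> nat \<Rightarrow> nat \<Rightarrow> 'a" where
  "watson_cert p N k = p ^ (N + 2) * (1 - p^k)^2 * (1 - p^(2*k)) *
     qpochhammer (inverse (p ^ (N + 3))) p k * qpochhammer (p ^ (N + 1)) p k * watson_weight p k"

lemma watson_rec_sum:
  "watson_rec p u (\<Sum>k\<in>K. f0 k) (\<Sum>k\<in>K. f1 k) (\<Sum>k\<in>K. f2 k) (\<Sum>k\<in>K. f3 k)
     = (\<Sum>k\<in>K. watson_rec p u (f0 k) (f1 k) (f2 k) (f3 k))"
  by (simp add: watson_rec_def sum_distrib_left sum_subtractf sum.distrib sum_negf)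

lemma watson_term_eq_0:
  fixes p :: "'a::field"
  assumes "p \<noteq> 0" "M < k"
  shows "watson_term p M k = 0"
proof -
  have "qpochhammer (inverse (p ^ M)) p k = 0"
    by (rule qpochhammer_eq_0[of M]) (use assms in auto)
  then show ?thesis by (simp add: watson_term_def)
qed

lemma watson_sum_eq_sum_lessThan:
  fixes p :: "'a::field"
  assumes "p \<noteq> 0" "M < K"
  shows "(\<Sum>k<K. watson_term p M k) = watson_sum p M"
proof -
  have "(\<Sum>k<K. watson_term p M k) = (\<Sum>k\<le>M. watson_term p M k) + (\<Sum>k\<in>{M<..<K}. watson_term p M k)"
    using \<open>M < K\<close> by (subst sum.union_disjoint[symmetric]) (auto intro: sum.cong)
  also have "(\<Sum>k\<in>{M<..<K}. watson_term p M k) = 0"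
    using \<open>p \<noteq> 0\<close> by (intro sum.neutral) (auto intro: watson_term_eq_0)
  finally show ?thesis by (simp add: watson_sum_def)
qed

context
  fixes p :: "'a::field"
  assumes p_nonzero: "p \<noteq> 0" and not_root_of_unity: "\<And>m. m > 0 \<Longrightarrow> p ^ m \<noteq> 1"
begin

lemma one_minus_power_nonzero: "m > 0 \<Longrightarrow> 1 - p ^ m \<noteq> 0"
  using not_root_of_unity by auto

lemma qpochhammer_base_nonzero: "0 < a \<Longrightarrow> qpochhammer (p ^ a) (p ^ a) k \<noteq> 0"
proof (rule qpochhammer_nonzero)
  fix j assume "0 < a"
  have "p ^ a * (p ^ a) ^ j = p ^ (a * Suc j)"
    by (simp add: power_mult[symmetric] power_add[symmetric])
  then show "p ^ a * (p ^ a) ^ j \<noteq> 1" using not_root_of_unity \<open>0 < a\<close> by simp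
qed

lemma watson_weight_Suc:
  "watson_weight p (Suc k) * (1 - p ^ Suc k)^2 * (1 - p ^ (2 * Suc k))
     = p * (1 - p * p ^ (2 * k)) * watson_weight p k"
proof -
  define x where "x = p ^ k"
  define A B C where "A = qpochhammer p (p^2) k" and "B = qpochhammer p p k"
    and "C = qpochhammer (p^2) (p^2) k"
  have "B \<noteq> 0" "C \<noteq> 0"
    using qpochhammer_base_nonzero[of 1 k] qpochhammer_base_nonzero[of 2 k] by (simp_all add: B_def C_def)
  have x_powers: "p ^ Suc k = p * x" "p ^ (2 * Suc k) = p^2 * x^2" "p * p ^ (2 * k) = p * x^2"
    "(p^2) ^ k = x^2"
    by (simp_all add: x_def power_add[symmetric] power_mult[symmetric] mult.commute)
  have "1 - p * x \<noteq> 0" "1 - p^2 * x^2 \<noteq> 0"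
    using one_minus_power_nonzero[of "Suc k"] one_minus_power_nonzero[of "2 * Suc k"]
    unfolding x_powers by simp_all
  have weight: "watson_weight p k = A * x / (B^2 * C)"
    by (simp add: watson_weight_def A_def B_def C_def x_def)
  have weight_Suc: "watson_weight p (Suc k)
      = A * (1 - p * x^2) * (p * x) / ((B * (1 - p * x))^2 * (C * (1 - p^2 * x^2)))"
    unfolding watson_weight_def qpochhammer_Suc x_powers by (simp add: A_def B_def C_def x_def)
  show ?thesis
    unfolding x_powers weight weight_Suc
    using \<open>B \<noteq> 0\<close> \<open>C \<noteq> 0\<close> \<open>1 - p * x \<noteq> 0\<close> \<open>1 - p^2 * x^2 \<noteq> 0\<close>
    by (simp add: field_simps) algebra
qed

lemma watson_cert_Suc:
  fixes N k :: nat
  defines "K \<equiv> qpochhammer (inverse (p ^ (N + 3))) p k * qpochhammer (p ^ (N + 1)) p k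
                  * watson_weight p k"
  shows "watson_cert p N (Suc k) = K * (p^3 * p^N - p^k) * (1 - p * p^N * p^k) * (1 - p * (p^k)^2)"
proof -
  define a u x where "a = inverse (p ^ (N + 3))" and "u = p ^ N" and "x = p ^ k"
  have a_inverse: "p^3 * u * a = 1"
    using p_nonzero by (simp add: a_def u_def power_add field_simps)
  have "p * p ^ (2 * k) = p * x^2"
    by (simp add: x_def power_mult[symmetric] mult.commute)
  then have powers: "p ^ (N + 2) = p^2 * u" "p ^ (N + 1) = p * u" "p * p ^ (2 * k) = p * x^2"
    by (simp_all add: u_def power_add mult.commute power2_eq_square)
  have "watson_cert p N (Suc k) = p ^ (N + 2) * qpochhammer a p (Suc k) * qpochhammer (p ^ (N + 1)) p (Suc k)
      * (watson_weight p (Suc k) * (1 - p ^ Suc k)^2 * (1 - p ^ (2 * Suc k)))"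
    by (simp add: watson_cert_def a_def mult_ac)
  also have "\<dots> = p^2 * u * (qpochhammer a p k * (1 - a * x))
      * (qpochhammer (p * u) p k * (1 - p * u * x)) * (p * (1 - p * x^2) * watson_weight p k)"
    unfolding watson_weight_Suc qpochhammer_Suc powers x_def ..
  also have "\<dots> = K * (p^3 * u - x) * (1 - p * u * x) * (1 - p * x^2)"
    unfolding K_def a_def[symmetric] powers using a_inverse by algebra
  finally show ?thesis by (simp only: u_def x_def)
qed

lemma watson_term_shift:
  fixes N k i :: nat
  defines "a \<equiv> inverse (p ^ (N + 3))" and "b \<equiv> p ^ (N + 1)" and "x \<equiv> p ^ k"
  assumes "i \<le> 3"
  shows "watson_term p (N + i) k * qpochhammer a p (3 - i) * qpochhammer b p i
     = qpochhammer a p k * qpochhammer b p k * watson_weight p k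
       * qpochhammer (a * x) p (3 - i) * qpochhammer (b * x) p i"
proof -
  have "inverse (p ^ (N + i)) = a * p ^ (3 - i)" "p ^ (N + i + 1) = b * p ^ i"
    using p_nonzero \<open>i \<le> 3\<close> by (simp_all add: a_def b_def power_add field_simps flip: power_diff)
  then have "watson_term p (N + i) k * qpochhammer a p (3 - i) * qpochhammer b p i
      = (qpochhammer a p (3 - i) * qpochhammer (a * p ^ (3 - i)) p k)
        * (qpochhammer b p i * qpochhammer (b * p ^ i) p k) * watson_weight p k"
    unfolding watson_term_def by (simp only: mult_ac)
  also have "\<dots> = (qpochhammer a p k * qpochhammer (a * x) p (3 - i))
        * (qpochhammer b p k * qpochhammer (b * x) p i) * watson_weight p k"
    unfolding x_def qpochhammer_swap ..
  finally show ?thesis by (simp only: mult_ac)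
qed

lemma watson_rec_telescoping:
  "watson_rec p (p ^ N) (watson_term p N k) (watson_term p (N + 1) k)
       (watson_term p (N + 2) k) (watson_term p (N + 3) k)
     = p^3 * (1 - p^3 * (p^N)^2) * (1 - p^4 * (p^N)^2) * (1 - p^5 * (p^N)^2)
       * (watson_cert p N (Suc k) - watson_cert p N k)"
proof -
  define u x a b where "u = p ^ N" and "x = p ^ k" and "a = inverse (p ^ (N + 3))"
    and "b = p ^ (N + 1)"
  define K where "K = qpochhammer a p k * qpochhammer b p k * watson_weight p k"
  have a_inverse: "p^3 * u * a = 1"
    using p_nonzero by (simp add: a_def u_def power_add field_simps)
  have b: "b = p * u"
    by (simp add: b_def u_def)
  have shift: "watson_term p (N + i) k * qpochhammer a p (3 - i) * qpochhammer b p i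
      = K * qpochhammer (a * x) p (3 - i) * qpochhammer (b * x) p i" if "i \<le> 3" for i
    using watson_term_shift[OF that, of N k] by (simp add: a_def b_def x_def K_def)
  have r0: "watson_term p N k * ((p^3*u - 1) * (p^3*u - p) * (p^3*u - p^2))
      = K * ((p^3*u - x) * (p^3*u - p*x) * (p^3*u - p^2*x))"
    using shift[of 0] a_inverse by (simp add: qpochhammer_def numeral_3_eq_3) algebra
  have r1: "watson_term p (N + 1) k * ((p^3*u - 1) * (p^3*u - p) * (1 - p*u))
      = K * ((p^3*u - x) * (p^3*u - p*x) * (1 - p*u*x))"
    using shift[of 1] a_inverse b by (simp add: qpochhammer_def numeral_2_eq_2 numeral_3_eq_3) algebra
  have r2: "watson_term p (N + 2) k * ((p^3*u - 1) * (1 - p*u) * (1 - p^2*u))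
      = K * ((p^3*u - x) * (1 - p*u*x) * (1 - p^2*u*x))"
    using shift[of 2] a_inverse b by (simp add: qpochhammer_def numeral_2_eq_2 numeral_3_eq_3) algebra
  have r3: "watson_term p (N + 3) k * ((1 - p*u) * (1 - p^2*u) * (1 - p^3*u))
      = K * ((1 - p*u*x) * (1 - p^2*u*x) * (1 - p^3*u*x))"
    using shift[of 3] b by (simp add: qpochhammer_def numeral_2_eq_2 numeral_3_eq_3) algebra
  have "p ^ (N + 2) = p^2 * u" "p ^ (2 * k) = x^2"
    by (simp add: u_def power_add power2_eq_square mult.commute)
      (simp add: x_def power_mult[symmetric] mult.commute)
  then have "watson_cert p N k = p^2 * u * (1 - x)^2 * (1 - x^2) * K"
    unfolding watson_cert_def a_def[symmetric] b_def[symmetric] x_def[symmetric]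
    by (simp add: K_def mult_ac)
  then have cert: "watson_cert p N (Suc k) - watson_cert p N k
      = K * ((p^3*u - x) * (1 - p*u*x) * (1 - p*x^2) - p^2*u * (1 - x)^2 * (1 - x^2))"
    unfolding watson_cert_Suc a_def[symmetric] b_def[symmetric] K_def[symmetric] u_def[symmetric]
      x_def[symmetric] by algebra
  have "watson_rec p u (watson_term p N k) (watson_term p (N + 1) k)
       (watson_term p (N + 2) k) (watson_term p (N + 3) k)
    = - p * (1 - p*u)^2 * (1 - p^5*u^2)
        * (watson_term p N k * ((p^3*u - 1) * (p^3*u - p) * (p^3*u - p^2)))
      + p^5 * u * (1 - p^2*u)^2 * (1 - p^3*u^2)
        * (watson_term p (N + 1) k * ((p^3*u - 1) * (p^3*u - p) * (1 - p*u)))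
      + p^3 * (1 - p^2*u)^2 * (1 - p^5*u^2)
        * (watson_term p (N + 2) k * ((p^3*u - 1) * (1 - p*u) * (1 - p^2*u)))
      - p^5 * u * (1 - p^3*u)^2 * (1 - p^3*u^2)
        * (watson_term p (N + 3) k * ((1 - p*u) * (1 - p^2*u) * (1 - p^3*u)))"
    unfolding watson_rec_def by (simp only: mult_ac)
  also have "\<dots> = - p * (1 - p*u)^2 * (1 - p^5*u^2)
        * (K * ((p^3*u - x) * (p^3*u - p*x) * (p^3*u - p^2*x)))
      + p^5 * u * (1 - p^2*u)^2 * (1 - p^3*u^2)
        * (K * ((p^3*u - x) * (p^3*u - p*x) * (1 - p*u*x)))
      + p^3 * (1 - p^2*u)^2 * (1 - p^5*u^2)
        * (K * ((p^3*u - x) * (1 - p*u*x) * (1 - p^2*u*x)))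
      - p^5 * u * (1 - p^3*u)^2 * (1 - p^3*u^2)
        * (K * ((1 - p*u*x) * (1 - p^2*u*x) * (1 - p^3*u*x)))"
    by (simp only: r0 r1 r2 r3)
  also have "\<dots> = p^3 * (1 - p^3*u^2) * (1 - p^4*u^2) * (1 - p^5*u^2)
      * (K * ((p^3*u - x) * (1 - p*u*x) * (1 - p*x^2) - p^2*u * (1 - x)^2 * (1 - x^2)))"
    by algebra
  finally show ?thesis
    unfolding cert u_def .
qed

lemma watson_sum_rec:
  "watson_rec p (p ^ N) (watson_sum p N) (watson_sum p (N + 1))
     (watson_sum p (N + 2)) (watson_sum p (N + 3)) = 0"
proof -
  define Q where "Q = p^3 * (1 - p^3 * (p^N)^2) * (1 - p^4 * (p^N)^2) * (1 - p^5 * (p^N)^2)"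
  have "watson_sum p N = (\<Sum>k<N + 4. watson_term p N k)"
    "watson_sum p (N + 1) = (\<Sum>k<N + 4. watson_term p (N + 1) k)"
    "watson_sum p (N + 2) = (\<Sum>k<N + 4. watson_term p (N + 2) k)"
    "watson_sum p (N + 3) = (\<Sum>k<N + 4. watson_term p (N + 3) k)"
    by (simp_all add: watson_sum_eq_sum_lessThan p_nonzero)
  then have "watson_rec p (p ^ N) (watson_sum p N) (watson_sum p (N + 1))
     (watson_sum p (N + 2)) (watson_sum p (N + 3))
      = (\<Sum>k<N + 4. watson_rec p (p ^ N) (watson_term p N k) (watson_term p (N + 1) k)
           (watson_term p (N + 2) k) (watson_term p (N + 3) k))"
    by (simp only: watson_rec_sum)
  also have "\<dots> = Q * (\<Sum>k<N + 4. watson_cert p N (Suc k) - watson_cert p N k)"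
    by (simp only: watson_rec_telescoping Q_def sum_distrib_left)
  also have "(\<Sum>k<N + 4. watson_cert p N (Suc k) - watson_cert p N k)
      = watson_cert p N (N + 4) - watson_cert p N 0"
    by (rule sum_lessThan_telescope)
  also have "\<dots> = 0"
    by (simp add: watson_cert_def qpochhammer_eq_0[of "N + 3"] p_nonzero)
  finally show ?thesis by simp
qed

lemma watson_value_step:
  "(1 - p ^ (M + 2))^2 * watson_value p (M + 2) = p * (1 - p ^ (M + 1))^2 * watson_value p M"
proof (cases "even M")
  case True
  define m A B where "m = M div 2" and "A = qpochhammer p (p^2) m" and "B = qpochhammer (p^2) (p^2) m"
  have M: "M = 2 * m" "(M + 2) div 2 = Suc m" using True by (simp_all add: m_def)
  have "B \<noteq> 0" "1 - p ^ (M + 2) \<noteq> 0"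
    using qpochhammer_base_nonzero[of 2 m] one_minus_power_nonzero[of "M + 2"] by (simp_all add: B_def)
  have powers: "p * (p^2) ^ m = p ^ (M + 1)" "p^2 * (p^2) ^ m = p ^ (M + 2)"
    by (simp_all add: M power_mult[symmetric] power_add[symmetric])
  have "even (M + 2)" using True by simp
  then have "watson_value p (M + 2)
      = p ^ Suc m * qpochhammer p (p^2) (Suc m) ^ 2 / qpochhammer (p^2) (p^2) (Suc m) ^ 2"
    unfolding watson_value_def M(2) by (simp only: if_True)
  also have "\<dots> = p ^ Suc m * (A * (1 - p ^ (M + 1)))^2 / (B * (1 - p ^ (M + 2)))^2"
    unfolding qpochhammer_Suc A_def[symmetric] B_def[symmetric] powers ..
  finally have value_M2: "watson_value p (M + 2)
      = p ^ Suc m * (A * (1 - p ^ (M + 1)))^2 / (B * (1 - p ^ (M + 2)))^2" .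
  have value_M: "watson_value p M = p ^ m * A^2 / B^2"
    using True by (simp add: watson_value_def A_def B_def m_def)
  show ?thesis
    unfolding value_M value_M2 using \<open>B \<noteq> 0\<close> \<open>1 - p ^ (M + 2) \<noteq> 0\<close>
    by (simp add: field_simps) algebra
next
  case False
  then show ?thesis by (simp add: watson_value_def)
qed

lemma watson_value_rec:
  "watson_rec p (p ^ N) (watson_value p N) (watson_value p (N + 1))
     (watson_value p (N + 2)) (watson_value p (N + 3)) = 0"
proof -
  define u where "u = p ^ N"
  have powers: "p ^ (N + 1) = p * u" "p ^ (N + 2) = p^2 * u" "p ^ (N + 3) = p^3 * u"
    by (simp_all add: u_def power_add mult.commute power2_eq_square power3_eq_cube)
  show ?thesis
  proof (cases "even N")
    case True
    have step: "(1 - p^2 * u)^2 * watson_value p (N + 2) = p * (1 - p * u)^2 * watson_value p N"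
      using watson_value_step[of N] unfolding powers .
    have "(1 - p^2 * u)^2 * watson_rec p u (watson_value p N) 0 (watson_value p (N + 2)) 0 = 0"
      unfolding watson_rec_def using step by algebra
    moreover have "1 - p^2 * u \<noteq> 0"
      using one_minus_power_nonzero[of "N + 2"] unfolding powers by simp
    moreover have "watson_value p (N + 1) = 0" "watson_value p (N + 3) = 0"
      using True by (simp_all add: watson_value_def)
    ultimately show ?thesis by (simp add: u_def)
  next
    case False
    have step: "(1 - p^3 * u)^2 * watson_value p (N + 3) = p * (1 - p^2 * u)^2 * watson_value p (N + 1)"
    proof -
      have "N + 1 + 2 = N + 3" "N + 1 + 1 = N + 2" by simp_all
      then show ?thesis using watson_value_step[of "N + 1"] by (simp only: powers)
    qed
    have "(1 - p^3 * u)^2 * watson_rec p u 0 (watson_value p (N + 1)) 0 (watson_value p (N + 3)) = 0"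
      unfolding watson_rec_def using step by algebra
    moreover have "1 - p^3 * u \<noteq> 0"
      using one_minus_power_nonzero[of "N + 3"] unfolding powers by simp
    moreover have "watson_value p N = 0" "watson_value p (N + 2) = 0"
      using False by (simp_all add: watson_value_def)
    ultimately show ?thesis by (simp add: u_def)
  qed
qed

lemma watson_rec_unique_last:
  assumes "watson_rec p (p ^ N) s0 s1 s2 s3 = 0" "watson_rec p (p ^ N) s0 s1 s2 t3 = 0"
  shows "s3 = t3"
proof -
  define u where "u = p ^ N"
  define c where "c = p^5 * u * (1 - p^3*u)^2 * (1 - p^3*u^2) * (1 - p*u) * (1 - p^2*u) * (1 - p^3*u)"
  have "c * (s3 - t3) = watson_rec p u s0 s1 s2 t3 - watson_rec p u s0 s1 s2 s3"
    unfolding watson_rec_def c_def by algebra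
  then have "c * (s3 - t3) = 0"
    using assms by (simp add: u_def)
  moreover have "c \<noteq> 0"
  proof -
    have "1 - p ^ m * u ^ e \<noteq> 0" if "0 < m" for m e
      using one_minus_power_nonzero[of "m + N * e"] that
      by (simp add: u_def power_add power_mult)
    from this[of 3 1] this[of 3 2] this[of 1 1] this[of 2 1] show ?thesis
      using p_nonzero by (simp add: c_def u_def)
  qed
  ultimately show ?thesis by simp
qed

lemma watson_sum_base:
  "watson_sum p 0 = watson_value p 0" "watson_sum p 1 = watson_value p 1"
  "watson_sum p 2 = watson_value p 2"
proof -
  have "1 - p \<noteq> 0" "1 - p^2 \<noteq> 0" "1 - p^3 \<noteq> 0" "1 - p^4 \<noteq> 0"
    using one_minus_power_nonzero[of 1] one_minus_power_nonzero[of 2] one_minus_power_nonzero[of 3]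
      one_minus_power_nonzero[of 4] by simp_all
  note nonzero = this p_nonzero
  show "watson_sum p 0 = watson_value p 0"
    by (simp add: watson_sum_def watson_value_def watson_term_def watson_weight_def)
  show "watson_sum p 1 = watson_value p 1"
    using nonzero by (simp add: watson_sum_def watson_value_def watson_term_def watson_weight_def
        qpochhammer_def divide_simps) algebra
  show "watson_sum p 2 = watson_value p 2"
    using nonzero by (simp add: watson_sum_def watson_value_def watson_term_def watson_weight_def
        qpochhammer_def eval_nat_numeral inverse_eq_divide divide_simps) algebra
qed

theorem q_watson: "watson_sum p M = watson_value p M"
proof (induction M rule: less_induct)
  case (less M)
  show ?case
  proof (cases "M < 3")
    case True
    then consider "M = 0" | "M = 1" | "M = 2" by linarith
    then show ?thesis using watson_sum_base by cases simp_all
  next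
    case False
    then obtain N where "M = N + 3" by (metis add.commute le_Suc_ex not_less)
    then have "watson_sum p N = watson_value p N" "watson_sum p (N + 1) = watson_value p (N + 1)"
      "watson_sum p (N + 2) = watson_value p (N + 2)"
      using less by simp_all
    then show ?thesis
      using watson_sum_rec[of N] watson_value_rec[of N] \<open>M = N + 3\<close>
      by (metis watson_rec_unique_last)
  qed
qed

end

section \<open>Congruences of rational functions\<close>

lemma to_fract_power: "to_fract (a ^ n) = to_fract a ^ n"
  by (induction n) simp_all

lemma to_fract_prod: "to_fract (\<Prod>i\<in>A. f i) = (\<Prod>i\<in>A. to_fract (f i))"
  by (induction A rule: infinite_finite_induct) simp_all

lemma to_fract_qpochhammer: "qpochhammer (to_fract a) (to_fract b) k = to_fract (qpochhammer a b k)"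
  by (simp add: qpochhammer_def to_fract_prod to_fract_power)

definition integral_at :: "'a::{idom, semiring_gcd} \<Rightarrow> 'a fract \<Rightarrow> bool" where
  "integral_at P z \<longleftrightarrow> (\<exists>a b. b \<noteq> 0 \<and> coprime b P \<and> z = Fract a b)"

lemma integral_at_to_fract [simp]: "integral_at P (to_fract a)"
  unfolding integral_at_def to_fract_def by (intro exI[of _ a] exI[of _ 1]) simp

lemma integral_at_0 [simp]: "integral_at P 0" and integral_at_1 [simp]: "integral_at P 1"
  using integral_at_to_fract[of P 0] integral_at_to_fract[of P 1] by simp_all

lemma integral_at_add: "integral_at P x \<Longrightarrow> integral_at P y \<Longrightarrow> integral_at P (x + y)"
  unfolding integral_at_def by (elim exE conjE, rule exI, rule exI[of _ "_ * _"]) auto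

lemma integral_at_mult: "integral_at P x \<Longrightarrow> integral_at P y \<Longrightarrow> integral_at P (x * y)"
  unfolding integral_at_def by (elim exE conjE, rule exI, rule exI[of _ "_ * _"]) auto

lemma integral_at_uminus: "integral_at P x \<Longrightarrow> integral_at P (- x)"
  unfolding integral_at_def by (elim exE conjE, rule exI[of _ "- _"]) auto

lemma integral_at_diff: "integral_at P x \<Longrightarrow> integral_at P y \<Longrightarrow> integral_at P (x - y)"
  using integral_at_add[of P x "- y"] integral_at_uminus[of P y] by simp

lemma integral_at_power: "integral_at P x \<Longrightarrow> integral_at P (x ^ n)"
  by (induction n) (simp_all add: integral_at_mult)

lemma integral_at_prod:
  "(\<And>i. i \<in> A \<Longrightarrow> integral_at P (f i)) \<Longrightarrow> integral_at P (\<Prod>i\<in>A. f i)"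
  by (induction A rule: infinite_finite_induct) (simp_all add: integral_at_mult)

lemma integral_at_inverse_to_fract:
  assumes "coprime b P"
  shows "integral_at P (inverse (to_fract b))"
proof (cases "b = 0")
  case False
  then show ?thesis
    unfolding integral_at_def to_fract_def using assms by (intro exI[of _ 1] exI[of _ b]) simp
qed simp

lemma rf_cong_iff: "rf_cong x y P \<longleftrightarrow> (\<exists>z. integral_at P z \<and> x - y = to_fract P * z)"
proof
  assume "rf_cong x y P"
  then obtain N M where "M \<noteq> 0" "coprime M P" "P dvd N" "x - y = Fract N M"
    unfolding rf_cong_def by blast
  moreover from \<open>P dvd N\<close> obtain N' where "N = P * N'" ..
  ultimately show "\<exists>z. integral_at P z \<and> x - y = to_fract P * z"
    unfolding integral_at_def to_fract_def by (intro exI[of _ "Fract N' M"]) auto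
next
  assume "\<exists>z. integral_at P z \<and> x - y = to_fract P * z"
  then obtain a b where "b \<noteq> 0" "coprime b P" "x - y = to_fract P * Fract a b"
    unfolding integral_at_def by blast
  then show "rf_cong x y P"
    unfolding rf_cong_def to_fract_def by (intro exI[of _ "P * a"] exI[of _ b]) simp
qed

lemma rf_cong_refl [simp]: "rf_cong x x P"
  unfolding rf_cong_iff by (intro exI[of _ 0]) simp

lemma rf_cong_add:
  assumes "rf_cong x y P" "rf_cong x' y' P"
  shows "rf_cong (x + x') (y + y') P"
proof -
  from assms obtain z z' where "integral_at P z" "x - y = to_fract P * z"
    "integral_at P z'" "x' - y' = to_fract P * z'"
    unfolding rf_cong_iff by blast
  then show ?thesis
    unfolding rf_cong_iff by (intro exI[of _ "z + z'"]) (simp add: integral_at_add algebra_simps)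
qed

lemma rf_cong_sum:
  "(\<And>i. i \<in> A \<Longrightarrow> rf_cong (f i) (g i) P) \<Longrightarrow> rf_cong (\<Sum>i\<in>A. f i) (\<Sum>i\<in>A. g i) P"
  by (induction A rule: infinite_finite_induct) (auto intro: rf_cong_add)

lemma rf_cong_mult:
  assumes "rf_cong x y P" "rf_cong x' y' P" "integral_at P x'" "integral_at P y"
  shows "rf_cong (x * x') (y * y') P"
proof -
  from assms obtain z z' where "integral_at P z" "x - y = to_fract P * z"
    "integral_at P z'" "x' - y' = to_fract P * z'"
    unfolding rf_cong_iff by blast
  have "x * x' - y * y' = (x - y) * x' + y * (x' - y')"
    by (simp add: algebra_simps)
  also have "\<dots> = to_fract P * (z * x' + y * z')"
    by (simp add: \<open>x - y = to_fract P * z\<close> \<open>x' - y' = to_fract P * z'\<close> algebra_simps)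
  finally have "x * x' - y * y' = to_fract P * (z * x' + y * z')" .
  moreover have "integral_at P (z * x' + y * z')"
    using assms(3,4) \<open>integral_at P z\<close> \<open>integral_at P z'\<close> by (intro integral_at_add integral_at_mult)
  ultimately show ?thesis
    unfolding rf_cong_iff by blast
qed

lemma rf_cong_prod:
  assumes "\<And>i. i \<in> A \<Longrightarrow> rf_cong (f i) (g i) P"
    and "\<And>i. i \<in> A \<Longrightarrow> integral_at P (f i)" "\<And>i. i \<in> A \<Longrightarrow> integral_at P (g i)"
  shows "rf_cong (\<Prod>i\<in>A. f i) (\<Prod>i\<in>A. g i) P"
  using assms
proof (induction A rule: infinite_finite_induct)
  case (insert i A)
  then have "rf_cong (f i * (\<Prod>i\<in>A. f i)) (g i * (\<Prod>i\<in>A. g i)) P"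
    by (intro rf_cong_mult integral_at_prod) simp_all
  with insert.hyps show ?case by simp
qed simp_all

section \<open>Cyclotomic polynomials\<close>

definition root_unity :: "nat \<Rightarrow> nat \<Rightarrow> complex" where
  "root_unity n j = cis (2 * pi * real j / real n)"

lemma root_unity_eq_exp: "root_unity n j = exp (2 * of_real pi * \<i> * of_nat j / of_nat n)"
  by (simp add: root_unity_def cis_conv_exp field_simps)

lemma root_unity_eq_iff: "0 < n \<Longrightarrow> root_unity n j = root_unity n k \<longleftrightarrow> j mod n = k mod n"
  unfolding root_unity_eq_exp by (rule complex_root_unity_eq) simp

lemma root_unity_eq_1_iff: "0 < n \<Longrightarrow> root_unity n j = 1 \<longleftrightarrow> n dvd j"
  unfolding root_unity_eq_exp by (rule complex_root_unity_eq_1) simp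

lemma root_unity_power: "root_unity n j ^ m = root_unity n (j * m)"
  by (simp add: root_unity_def Complex.DeMoivre field_simps)

lemma root_unity_nonzero: "root_unity n j \<noteq> 0"
  by (simp add: root_unity_def)

lemma cyclotomic_eq_prod_roots:
  "cyclotomic n = (\<Prod>j\<in>{j\<in>{1..n}. coprime j n}. [:- root_unity n j, 1:])"
  by (simp add: cyclotomic_def root_unity_def)

lemma coprime_linear_poly:
  fixes M :: "'a::field_gcd poly"
  assumes "poly M z \<noteq> 0"
  shows "coprime M [:- z, 1:]"
proof -
  have "prime_elem [:- z, 1:]"
    by (rule prime_elem_linear_field_poly) simp
  moreover have "\<not> [:- z, 1:] dvd M"
    using assms by (simp add: poly_eq_0_iff_dvd)
  ultimately show ?thesis
    using prime_elem_imp_coprime coprime_commute by blast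
qed

lemma prod_linear_poly_dvd:
  fixes z :: "'b \<Rightarrow> 'a::field_gcd"
  assumes "finite S" "inj_on z S" "\<And>j. j \<in> S \<Longrightarrow> poly Q (z j) = 0"
  shows "(\<Prod>j\<in>S. [:- z j, 1:]) dvd Q"
  using assms
proof (induction S rule: finite_induct)
  case (insert i S)
  have coprime: "coprime [:- z i, 1:] (\<Prod>j\<in>S. [:- z j, 1:])"
  proof (rule prod_coprime_right)
    fix j assume "j \<in> S"
    then have "z j \<noteq> z i"
      using insert.prems(1) insert.hyps(2) by (auto simp: inj_on_def)
    then show "coprime [:- z i, 1:] [:- z j, 1:]"
      using coprime_linear_poly[of "[:- z i, 1:]" "z j"] by (simp add: coprime_commute)
  qed
  have "[:- z i, 1:] dvd Q"
    using insert.prems(2) by (simp add: poly_eq_0_iff_dvd)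
  moreover have "(\<Prod>j\<in>S. [:- z j, 1:]) dvd Q"
    using insert by (auto intro: inj_on_subset)
  ultimately show ?case
    unfolding prod.insert[OF insert.hyps] using coprime by (rule divides_mult)
qed simp

lemma cyclotomic_dvd_one_minus_monom: "0 < n \<Longrightarrow> cyclotomic n dvd 1 - [:0, 1:] ^ n"
  unfolding cyclotomic_eq_prod_roots
proof (rule prod_linear_poly_dvd)
  assume "0 < n"
  show "inj_on (root_unity n) {j \<in> {1..n}. coprime j n}"
    using \<open>0 < n\<close> by (auto simp: inj_on_def root_unity_eq_iff mod_if split: if_splits)
  show "poly (1 - [:0, 1:] ^ n) (root_unity n j) = 0" for j
    using \<open>0 < n\<close> by (simp add: root_unity_power root_unity_eq_1_iff)
qed simp

lemma coprime_cyclotomic: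
  assumes "\<And>j. j \<in> {1..n} \<Longrightarrow> coprime j n \<Longrightarrow> poly M (root_unity n j) \<noteq> 0"
  shows "coprime M (cyclotomic n)"
  unfolding cyclotomic_eq_prod_roots using assms
  by (intro prod_coprime_right coprime_linear_poly) auto

lemma coprime_monom_cyclotomic: "coprime ([:0, 1:] ^ m) (cyclotomic n)"
  by (rule coprime_cyclotomic) (simp add: root_unity_nonzero)

lemma coprime_one_minus_monom_cyclotomic:
  assumes "0 < n" "\<not> n dvd m"
  shows "coprime (1 - [:0, 1:] ^ m) (cyclotomic n)"
proof (rule coprime_cyclotomic)
  fix j assume "coprime j n"
  then have "\<not> n dvd j * m"
    using assms(2) by (simp add: coprime_commute coprime_dvd_mult_right_iff)
  then show "poly (1 - [:0, 1:] ^ m) (root_unity n j) \<noteq> 0"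
    using assms(1) by (simp add: root_unity_power root_unity_eq_1_iff)
qed

lemma coprime_qpochhammer_cyclotomic:
  assumes "0 < n" "\<And>i. i < k \<Longrightarrow> \<not> n dvd a + b * i"
  shows "coprime (qpochhammer ([:0, 1:] ^ a) ([:0, 1:] ^ b) k) (cyclotomic n)"
  unfolding qpochhammer_def
proof (rule prod_coprime_left)
  fix i assume "i \<in> {..<k}"
  then show "coprime (1 - [:0, 1:] ^ a * ([:0, 1:] ^ b) ^ i) (cyclotomic n)"
    using coprime_one_minus_monom_cyclotomic[OF assms(1) assms(2)]
    by (simp add: power_mult[symmetric] power_add[symmetric])
qed

section \<open>The supercongruence\<close>

lemma qpoch_eq_qpochhammer: "qpoch = qpochhammer"
  by (simp add: fun_eq_iff qpoch_def qpochhammer_def)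

lemma qvar_eq_to_fract: "qvar = to_fract [:0, 1:]"
  by (simp add: qvar_def to_fract_def)

lemma qvar_power: "qvar ^ m = to_fract ([:0, 1:] ^ m)"
  by (simp add: qvar_eq_to_fract to_fract_power)

lemma qvar_nonzero: "qvar \<noteq> 0"
  by (simp add: qvar_eq_to_fract)

lemma qvar_not_root_of_unity: "0 < m \<Longrightarrow> qvar ^ m \<noteq> 1"
proof
  assume "0 < m" "qvar ^ m = 1"
  then have "[:0, 1:] ^ m = (1 :: complex poly)"
    unfolding qvar_power by (metis to_fract_1 to_fract_eq_iff)
  then have "degree ([:0, 1 :: complex:] ^ m) = 0" by simp
  with \<open>0 < m\<close> show False by (simp add: degree_power_eq)
qed

lemma integral_at_qvar_power: "integral_at P (qvar ^ m)"
  by (simp add: qvar_power)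

lemma integral_at_inverse_qvar_power: "integral_at (cyclotomic n ^ e) (inverse (qvar ^ m))"
  unfolding qvar_power
  by (rule integral_at_inverse_to_fract) (use coprime_monom_cyclotomic[of 1 n] in simp)

lemma not_dvd_mult_less:
  fixes n c i :: nat
  assumes "coprime n c" "0 < i" "i < n"
  shows "\<not> n dvd c * i"
  using assms by (auto simp: coprime_dvd_mult_right_iff dest: dvd_imp_le)

lemma integral_at_watson_weight:
  assumes "odd n" "k < n"
  shows "integral_at (cyclotomic n ^ 2) (watson_weight (qvar^2) k)"
proof -
  define X where "X = [:0, 1 :: complex:]"
  have "0 < n" using \<open>odd n\<close> by (rule odd_pos)
  have "coprime n 2" "coprime n 4"
    using \<open>odd n\<close> coprime_power_right_iff[of n 2 2] by (simp_all add: coprime_commute)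
  have not_dvd: "\<not> n dvd c + c * i" if "coprime n c" "i < k" for c i
    using not_dvd_mult_less[OF that(1), of "Suc i"] that(2) \<open>k < n\<close> by (simp add: algebra_simps)
  have "coprime (qpochhammer (X^2) (X^2) k ^ 2 * qpochhammer ((X^2)^2) ((X^2)^2) k) (cyclotomic n ^ 2)"
    using coprime_qpochhammer_cyclotomic[OF \<open>0 < n\<close>, of k 2 2]
      coprime_qpochhammer_cyclotomic[OF \<open>0 < n\<close>, of k 4 4]
      not_dvd[OF \<open>coprime n 2\<close>] not_dvd[OF \<open>coprime n 4\<close>]
    by (simp add: X_def flip: power_mult)
  then have "integral_at (cyclotomic n ^ 2)
      (to_fract (qpochhammer (X^2) ((X^2)^2) k * (X^2)^k)
       * inverse (to_fract (qpochhammer (X^2) (X^2) k ^ 2 * qpochhammer ((X^2)^2) ((X^2)^2) k)))"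
    by (intro integral_at_mult integral_at_to_fract integral_at_inverse_to_fract)
  moreover have "watson_weight (to_fract (X^2)) k
      = to_fract (qpochhammer (X^2) ((X^2)^2) k * (X^2)^k)
        * inverse (to_fract (qpochhammer (X^2) (X^2) k ^ 2 * qpochhammer ((X^2)^2) ((X^2)^2) k))"
    by (simp add: watson_weight_def divide_inverse to_fract_power flip: to_fract_qpochhammer)
  ultimately show ?thesis
    by (simp add: X_def qvar_power)
qed

lemma qpochhammer_square_cong:
  assumes "n = 2 * N + 1"
  shows "rf_cong (qpochhammer qvar (qvar^2) k ^ 2)
           (qpochhammer (inverse ((qvar^2)^N)) (qvar^2) k * qpochhammer ((qvar^2)^(N + 1)) (qvar^2) k)
           (cyclotomic n ^ 2)"
proof -
  define q where "q = qvar"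
  define A B where "A j = (1 - q^(2*j+1))^2"
    and "B j = (1 - q^(2*j+1) * inverse (q^n)) * (1 - q^(2*j+1) * q^n)" for j
  note integral_q = integral_at_qvar_power[where P = "cyclotomic n ^ 2", folded q_def]
    and integral_inverse_q = integral_at_inverse_qvar_power[where n = n and e = 2, folded q_def]
  obtain R where R: "1 - [:0, 1:]^n = cyclotomic n * R"
    using cyclotomic_dvd_one_minus_monom[of n] assms by auto
  have "rf_cong (A j) (B j) (cyclotomic n ^ 2)" for j
  proof -
    define w v where "w = q^(2*j+1)" and "v = q^n"
    have "v \<noteq> 0" by (simp add: v_def q_def qvar_nonzero)
    then have "A j - B j = (1 - v)^2 * (w * inverse v)"
      unfolding A_def B_def w_def[symmetric] v_def[symmetric] by (simp add: field_simps) algebra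
    also have "1 - v = to_fract (1 - [:0, 1:]^n)"
      by (simp add: v_def q_def qvar_power)
    also have "\<dots> = to_fract (cyclotomic n) * to_fract R"
      by (simp add: R)
    finally have "A j - B j = (to_fract (cyclotomic n) * to_fract R)^2 * (w * inverse v)" .
    also have "\<dots> = to_fract (cyclotomic n ^ 2) * (to_fract (R^2) * w * inverse v)"
      by (simp add: to_fract_power power_mult_distrib mult_ac)
    finally have "A j - B j = to_fract (cyclotomic n ^ 2) * (to_fract (R^2) * w * inverse v)" .
    moreover have "integral_at (cyclotomic n ^ 2) (to_fract (R^2) * w * inverse v)"
      unfolding w_def v_def by (intro integral_at_mult integral_at_to_fract integral_q integral_inverse_q)
    ultimately show ?thesis
      unfolding rf_cong_iff by blast
  qed
  moreover have "integral_at (cyclotomic n ^ 2) (A j)" "integral_at (cyclotomic n ^ 2) (B j)" for j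
    unfolding A_def B_def
    by (intro integral_at_mult integral_at_diff integral_at_power integral_at_1 integral_q integral_inverse_q)+
  ultimately have "rf_cong (\<Prod>j<k. A j) (\<Prod>j<k. B j) (cyclotomic n ^ 2)"
    by (intro rf_cong_prod)
  moreover have "qpochhammer qvar (qvar^2) k ^ 2 = (\<Prod>j<k. A j)"
    by (simp add: qpochhammer_def A_def q_def prod_power_distrib power_mult[symmetric] mult.commute)
  moreover have "(qvar^2)^N = q^(2*N)"
    by (simp only: q_def power_mult)
  then have "inverse ((qvar^2)^N) = q * inverse (q^n)" "(qvar^2)^(N + 1) = q * q^n"
    using qvar_nonzero[folded q_def] by (simp_all add: assms field_simps q_def power2_eq_square flip: power_mult)
  then have "qpochhammer (inverse ((qvar^2)^N)) (qvar^2) k * qpochhammer ((qvar^2)^(N + 1)) (qvar^2) k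
      = (\<Prod>j<k. B j)"
    by (simp add: qpochhammer_def B_def q_def prod.distrib power_mult[symmetric] mult_ac)
  ultimately show ?thesis by simp
qed

lemma summand_cong_watson_term:
  assumes "odd n" "k < n"
  shows "rf_cong (qpochhammer qvar (qvar^2) k ^ 2 * watson_weight (qvar^2) k)
           (watson_term (qvar^2) (n div 2) k) (cyclotomic n ^ 2)"
proof -
  define N where "N = n div 2"
  have "n = 2 * N + 1" using \<open>odd n\<close> by (simp add: N_def)
  have "integral_at (cyclotomic n ^ 2)
      (qpochhammer (inverse ((qvar^2)^N)) (qvar^2) k * qpochhammer ((qvar^2)^(N + 1)) (qvar^2) k)"
    unfolding qpochhammer_def power_mult[symmetric]
    by (intro integral_at_mult integral_at_prod integral_at_diff integral_at_1 integral_at_power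
        integral_at_qvar_power integral_at_inverse_qvar_power)
  then show ?thesis
    unfolding watson_term_def N_def[symmetric]
    using qpochhammer_square_cong[OF \<open>n = 2 * N + 1\<close>, of k] integral_at_watson_weight[OF assms]
    by (intro rf_cong_mult) simp_all
qed

lemma watson_sum_cong:
  assumes "odd n"
  shows "rf_cong (\<Sum>k<n. qpochhammer qvar (qvar^2) k ^ 2 * watson_weight (qvar^2) k)
           (watson_value (qvar^2) (n div 2)) (cyclotomic n ^ 2)"
proof -
  have "rf_cong (\<Sum>k<n. qpochhammer qvar (qvar^2) k ^ 2 * watson_weight (qvar^2) k)
      (\<Sum>k<n. watson_term (qvar^2) (n div 2) k) (cyclotomic n ^ 2)"
    using assms by (intro rf_cong_sum summand_cong_watson_term) simp_all
  moreover have "(\<Sum>k<n. watson_term (qvar^2) (n div 2) k) = watson_sum (qvar^2) (n div 2)"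
    using odd_pos[OF assms] qvar_nonzero by (intro watson_sum_eq_sum_lessThan) simp_all
  moreover have "watson_sum (qvar^2) (n div 2) = watson_value (qvar^2) (n div 2)"
    using qvar_nonzero qvar_not_root_of_unity by (intro q_watson) (simp_all flip: power_mult)
  ultimately show ?thesis by simp
qed

lemma qvar_4: "qvar^4 = (qvar^2)^2"
  by (simp flip: power_mult)

lemma qpoch_summand_eq:
  "qpoch qvar (qvar^2) k ^ 2 * qpoch (qvar^2) (qvar^4) k
     / (qpoch (qvar^2) (qvar^2) k ^ 2 * qpoch (qvar^4) (qvar^4) k) * qvar ^ (2 * k)
   = qpochhammer qvar (qvar^2) k ^ 2 * watson_weight (qvar^2) k"
  unfolding qpoch_eq_qpochhammer watson_weight_def qvar_4 power_mult
  by (simp add: mult_ac times_divide_eq_left times_divide_eq_right)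

lemma watson_value_mod_4_eq_1:
  assumes "n mod 4 = 1"
  shows "watson_value (qvar^2) (n div 2) = qvar ^ ((n - 1) div 2)
      * qpoch (qvar^2) (qvar^4) ((n - 1) div 4) ^ 2 / qpoch (qvar^4) (qvar^4) ((n - 1) div 4) ^ 2"
proof -
  obtain m where "n = 4 * m + 1"
    using assms by (metis div_mult_mod_eq mult.commute)
  then show ?thesis
    unfolding watson_value_def qpoch_eq_qpochhammer qvar_4 by (simp add: power_mult)
qed

lemma watson_value_mod_4_eq_3:
  assumes "n mod 4 = 3"
  shows "watson_value (qvar^2) (n div 2) = 0"
proof -
  obtain m where "n = 4 * m + 3"
    using assms by (metis div_mult_mod_eq mult.commute)
  then have "n div 2 = 2 * m + 1" by simp
  then show ?thesis
    by (simp add: watson_value_def)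
qed

theorem theorem2:
  fixes n :: nat
  assumes "n > 0"
  shows "(n mod 4 = 1 \<longrightarrow>
           rf_cong
             (\<Sum>k<n. qpoch qvar (qvar^2) k ^ 2 * qpoch (qvar^2) (qvar^4) k
                     / (qpoch (qvar^2) (qvar^2) k ^ 2 * qpoch (qvar^4) (qvar^4) k)
                     * qvar ^ (2 * k))
             (qvar ^ ((n - 1) div 2) * qpoch (qvar^2) (qvar^4) ((n - 1) div 4) ^ 2
                / qpoch (qvar^4) (qvar^4) ((n - 1) div 4) ^ 2)
             ((cyclotomic n)^2))
       \<and> (n mod 4 = 3 \<longrightarrow>
           rf_cong
             (\<Sum>k<n. qpoch qvar (qvar^2) k ^ 2 * qpoch (qvar^2) (qvar^4) k
                     / (qpoch (qvar^2) (qvar^2) k ^ 2 * qpoch (qvar^4) (qvar^4) k)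
                     * qvar ^ (2 * k))
             0
             ((cyclotomic n)^2))"
proof -
  \<comment> \<open>The hypothesis \<open>n > 0\<close> is implied by either congruence condition on \<open>n\<close>.\<close>
  have "odd n" if "n mod 4 = 1 \<or> n mod 4 = 3"
    using that by (metis dvd_mod_iff even_numeral odd_one odd_numeral)
  then show ?thesis
    unfolding qpoch_summand_eq
    using watson_sum_cong[of n] watson_value_mod_4_eq_1[of n] watson_value_mod_4_eq_3[of n]
    by auto
qed

end
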